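(* Let $n\geqslant 2$. For $\alpha\in\mathbf{I}\mathbb{N}_{\infty}^n$ let $\sigma_\alpha\in H(\mathbb{I})$ be the unique unit such that $\alpha=\sigma_\alpha\varepsilon$ for some idempotent $\varepsilon$ of $\mathbf{I}\mathbb{N}_{\infty}^n$. Then $\alpha\,\mathfrak{C}_{\mathbf{mg}}\,\beta$ if and only if $\sigma_\alpha=\sigma_\beta$; the quotient semigroup $\mathbf{I}\mathbb{N}_{\infty}^n/\mathfrak{C}_{\mathbf{mg}}$ is isomorphic to the symmetric group $\mathscr{S}_n$, and the natural homomorphism $\mathbf{I}\mathbb{N}_{\infty}^n\to\mathbf{I}\mathbb{N}_{\infty}^n/\mathfrak{C}_{\mathbf{mg}}$ corresponds to the map $\alpha\mapsto\sigma_\alpha$ onto $H(\mathbb{I})\cong\mathscr{S}_n$.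
   Context: $\mathbb{N}=\{1,2,3,\ldots\}$, $n\geqslant 2$, and $\mathbb{N}^n$ carries the Euclidean metric $d$. A partial isometry of $\mathbb{N}^n$ is an injective partial map $\alpha\colon\mathbb{N}^n\rightharpoonup\mathbb{N}^n$ with $d((\mathbf{x})\alpha,(\mathbf{y})\alpha)=d(\mathbf{x},\mathbf{y})$ for all $\mathbf{x},\mathbf{y}\in\operatorname{dom}\alpha$; it is cofinite if $\mathbb{N}^n\setminus\operatorname{dom}\alpha$ and $\mathbb{N}^n\setminus\operatorname{ran}\alpha$ are finite. $\mathbf{I}\mathbb{N}_{\infty}^n$ is the monoid of all partial cofinite isometries of $\mathbb{N}^n$ under composition of partial maps written on the right. Its identity is the identity map $\mathbb{I}$ of $\mathbb{N}^n$ and $H(\mathbb{I})$ is its group of units. $\mathscr{S}_n$ is the symmetric group on $\{1,\ldots,n\}$. For an inverse semigroup $S$, the least group congruence $\mathfrak{C}_{\mathbf{mg}}$ is defined by $a\,\mathfrak{C}_{\mathbf{mg}}\,b$ iff $ae=be$ for some idempotent $e\in S$. *)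

theory Defs
  imports Complex_Main "HOL-Algebra.Sym_Groups"
begin

(* Points of N^n (N = {1,2,...}) are encoded as functions nat => nat whose
   coordinates indexed by {1..n} are >= 1 and which vanish outside {1..n}. *)
definition INpts :: "nat \<Rightarrow> (nat \<Rightarrow> nat) set" where
  "INpts n = {x. (\<forall>i\<in>{1..n}. 1 \<le> x i) \<and> (\<forall>i. i \<notin> {1..n} \<longrightarrow> x i = 0)}"

definition INdist :: "nat \<Rightarrow> (nat \<Rightarrow> nat) \<Rightarrow> (nat \<Rightarrow> nat) \<Rightarrow> real" where
  "INdist n x y = sqrt (\<Sum>i\<in>{1..n}. (real (x i) - real (y i))^2)"

definition INinf :: "nat \<Rightarrow> ((nat \<Rightarrow> nat) \<rightharpoonup> (nat \<Rightarrow> nat)) set" where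
  "INinf n = {\<alpha>. dom \<alpha> \<subseteq> INpts n \<and> ran \<alpha> \<subseteq> INpts n \<and> inj_on \<alpha> (dom \<alpha>)
      \<and> (\<forall>x\<in>dom \<alpha>. \<forall>y\<in>dom \<alpha>. INdist n (the (\<alpha> x)) (the (\<alpha> y)) = INdist n x y)
      \<and> finite (INpts n - dom \<alpha>) \<and> finite (INpts n - ran \<alpha>)}"

(* composition of partial maps written on the right: x(\<alpha>\<beta>) = (x\<alpha>)\<beta> *)
definition INmul :: "('a \<rightharpoonup> 'a) \<Rightarrow> ('a \<rightharpoonup> 'a) \<Rightarrow> ('a \<rightharpoonup> 'a)" where
  "INmul \<alpha> \<beta> = \<beta> \<circ>\<^sub>m \<alpha>"

definition INid :: "nat \<Rightarrow> ((nat \<Rightarrow> nat) \<rightharpoonup> (nat \<Rightarrow> nat))" where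
  "INid n = (\<lambda>x. if x \<in> INpts n then Some x else None)"

definition INidem :: "nat \<Rightarrow> ((nat \<Rightarrow> nat) \<rightharpoonup> (nat \<Rightarrow> nat)) set" where
  "INidem n = {e \<in> INinf n. INmul e e = e}"

definition INunits :: "nat \<Rightarrow> ((nat \<Rightarrow> nat) \<rightharpoonup> (nat \<Rightarrow> nat)) set" where
  "INunits n = {u \<in> INinf n. \<exists>v\<in>INinf n. INmul u v = INid n \<and> INmul v u = INid n}"

definition INunits_grp :: "nat \<Rightarrow> ((nat \<Rightarrow> nat) \<rightharpoonup> (nat \<Rightarrow> nat)) monoid" where
  "INunits_grp n = \<lparr>carrier = INunits n, mult = INmul, one = INid n\<rparr>"

definition Cmg :: "nat \<Rightarrow> (((nat \<Rightarrow> nat) \<rightharpoonup> (nat \<Rightarrow> nat)) \<times> ((nat \<Rightarrow> nat) \<rightharpoonup> (nat \<Rightarrow> nat))) set" where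
  "Cmg n = {(a, b). a \<in> INinf n \<and> b \<in> INinf n \<and> (\<exists>e\<in>INidem n. INmul a e = INmul b e)}"

definition INsigma :: "nat \<Rightarrow> ((nat \<Rightarrow> nat) \<rightharpoonup> (nat \<Rightarrow> nat)) \<Rightarrow> ((nat \<Rightarrow> nat) \<rightharpoonup> (nat \<Rightarrow> nat))" where
  "INsigma n \<alpha> = (THE u. u \<in> INunits n \<and> (\<exists>e\<in>INidem n. \<alpha> = INmul u e))"

definition INquot :: "nat \<Rightarrow> ((nat \<Rightarrow> nat) \<rightharpoonup> (nat \<Rightarrow> nat)) set monoid" where
  "INquot n = \<lparr>carrier = INinf n // Cmg n,
     mult = (\<lambda>X Y. Cmg n `` {INmul (SOME x. x \<in> X) (SOME y. y \<in> Y)}),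
     one = Cmg n `` {INid n}\<rparr>"

end

theory Submission
  imports Defs
begin

text \<open>
  A partial isometry of \<open>\<nat>\<^sup>n\<close> with cofinite domain and range is the restriction of a
  permutation of coordinates \<open>x \<mapsto> x \<circ> p\<close>.  Far out, where every point lies in the domain and
  the range, the unit step from the diagonal point \<open>base\<close> to \<open>base + e\<^sub>i\<close> must be sent to
  a unit step \<open>\<plusminus>e\<^sub>j\<close>; comparing the distances of any point to these two points shows
  that coordinate \<open>j\<close> of its image is an affine function of its coordinate \<open>i\<close>, and
  positivity of coordinates (in the domain and, via preimages, in the range) pins that function
  down to the identity.  This needs \<open>n \<ge> 2\<close>: for \<open>n = 1\<close> the shift \<open>x \<mapsto> x + 1\<close> is a
  cofinite isometry.

  Hence every \<open>\<alpha>\<close> factors as the unit \<open>\<sigma>\<^sub>\<alpha>\<close> given by its permutation times the identity on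
  its range, \<open>\<alpha> \<mapsto> \<sigma>\<^sub>\<alpha>\<close> is multiplicative with idempotents going to \<open>id\<close>, and elements with
  the same permutation agree after the idempotent on the intersection of their ranges.
\<close>

section \<open>Coordinate permutations\<close>

definition coord_perm_on :: "(nat \<Rightarrow> nat) \<Rightarrow> (nat \<Rightarrow> nat) set \<Rightarrow> (nat \<Rightarrow> nat) \<rightharpoonup> (nat \<Rightarrow> nat)" where
  "coord_perm_on p D = (\<lambda>x. if x \<in> D then Some (x \<circ> p) else None)"

definition sq_dist :: "nat \<Rightarrow> (nat \<Rightarrow> nat) \<Rightarrow> (nat \<Rightarrow> nat) \<Rightarrow> int" where
  "sq_dist n x y = (\<Sum>i\<in>{1..n}. (int (x i) - int (y i))^2)"

definition diag_pt :: "nat \<Rightarrow> nat \<Rightarrow> nat \<Rightarrow> nat" where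
  "diag_pt n L = (\<lambda>j. if j \<in> {1..n} then L else 0)"

lemma INdist_eq_iff_sq_dist: "INdist n a b = INdist n c d \<longleftrightarrow> sq_dist n a b = sq_dist n c d"
proof -
  have "INdist n x y = sqrt (of_int (sq_dist n x y))" for x y
    by (simp add: INdist_def sq_dist_def)
  then show ?thesis by simp
qed

lemma sq_dist_self [simp]: "sq_dist n x x = 0"
  by (simp add: sq_dist_def)

lemma sq_dist_comp_permutes:
  assumes "p permutes {1..n}" shows "sq_dist n (x \<circ> p) (y \<circ> p) = sq_dist n x y"
  unfolding sq_dist_def using sum.permute[OF assms, of "\<lambda>i. (int (x i) - int (y i))^2"]
  by (simp add: o_def)

lemma sq_dist_diff_upd:
  assumes "j \<in> {1..n}" "\<forall>k\<in>{1..n}. k \<noteq> j \<longrightarrow> y k = z k"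
  shows "sq_dist n x y - sq_dist n x z = (int (x j) - int (y j))^2 - (int (x j) - int (z j))^2"
proof -
  have "sq_dist n x y - sq_dist n x z
      = (\<Sum>k\<in>{1..n}. (int (x k) - int (y k))^2 - (int (x k) - int (z k))^2)"
    unfolding sq_dist_def by (simp add: sum_subtractf)
  also have "\<dots> = (\<Sum>k\<in>{1..n}. if k = j then (int (x j) - int (y j))^2 - (int (x j) - int (z j))^2 else 0)"
    using assms(2) by (intro sum.cong) auto
  finally show ?thesis
    using assms(1) by (simp add: sum.delta)
qed

lemma sum_power2_int_eq_1:
  fixes h :: "'a \<Rightarrow> int"
  assumes "finite S" "(\<Sum>k\<in>S. (h k)^2) = 1"
  shows "\<exists>j\<in>S. (h j = 1 \<or> h j = -1) \<and> (\<forall>k\<in>S. k \<noteq> j \<longrightarrow> h k = 0)"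
proof -
  obtain j where j: "j \<in> S" "h j \<noteq> 0"
    using assms(2) by (metis (mono_tags, lifting) sum.neutral power_zero_numeral zero_neq_one)
  have split: "(\<Sum>k\<in>S. (h k)^2) = (h j)^2 + (\<Sum>k\<in>S-{j}. (h k)^2)"
    using assms(1) j(1) by (simp add: sum.remove)
  have rest_nonneg: "(\<Sum>k\<in>S-{j}. (h k)^2) \<ge> 0"
    by (intro sum_nonneg) auto
  have "(h j)^2 \<ge> 1"
    using j(2) by (simp add: int_one_le_iff_zero_less)
  then have hj: "(h j)^2 = 1" and rest: "(\<Sum>k\<in>S-{j}. (h k)^2) = 0"
    using split assms(2) rest_nonneg by linarith+
  have "\<forall>k\<in>S-{j}. (h k)^2 = 0"
    using rest assms(1) by (subst sum_nonneg_eq_0_iff[symmetric]) auto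
  then show ?thesis
    using hj j(1) by (auto simp: power2_eq_1_iff)
qed

lemma unit_shift_square_diff:
  fixes x b s y c :: int
  assumes "s = 1 \<or> s = -1"
    and "(x - (b + s))^2 - (x - b)^2 = (y - (c + 2))^2 - (y - (c + 1))^2"
  shows "x = b + s * (y - c - 1)"
  using assms by (auto simp: power2_eq_square algebra_simps)

lemma comp_permutes_in_INpts:
  assumes "p permutes {1..n}" "x \<in> INpts n" shows "x \<circ> p \<in> INpts n"
  using assms(2) permutes_in_image[OF assms(1)] permutes_not_in[OF assms(1)]
  unfolding INpts_def by auto

lemma comp_permutes_cancel:
  assumes "p permutes S" "x \<circ> p = y \<circ> p" shows "x = y"
  by (metis assms comp_id fun.map_comp permutes_inv_o(1))

lemma comp_permutes_inv_cancel:
  assumes "p permutes S" shows "y \<circ> Hilbert_Choice.inv p \<circ> p = y"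
  by (metis assms comp_id fun.map_comp permutes_inv_o(2))

lemma diag_pt_upd_in_INpts:
  assumes "1 \<le> L" "1 \<le> M" "i \<in> {1..n}" shows "(diag_pt n L)(i := M) \<in> INpts n"
  using assms unfolding diag_pt_def INpts_def by auto

lemma finite_complement_contains_large:
  assumes "finite (INpts n - D)"
  shows "\<exists>K. \<forall>y\<in>INpts n. \<forall>i\<in>{1..n}. K < y i \<longrightarrow> y \<in> D"
proof -
  have "finite (\<Union>x\<in>INpts n - D. x ` {1..n})"
    by (rule finite_UN_I[OF assms]) simp
  then obtain K where K: "\<forall>v\<in>(\<Union>x\<in>INpts n - D. x ` {1..n}). v \<le> K"
    unfolding finite_nat_set_iff_bounded_le by blast
  have "y \<in> D" if y: "y \<in> INpts n" "i \<in> {1..n}" "K < y i" for y i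
  proof (rule ccontr)
    assume "y \<notin> D"
    then have "y i \<le> K"
      using y by (intro K[rule_format] UN_I[of y]) auto
    with \<open>K < y i\<close> show False
      by simp
  qed
  then show ?thesis
    by blast
qed

lemma dom_coord_perm_on [simp]: "dom (coord_perm_on p D) = D"
  unfolding coord_perm_on_def dom_def by auto

lemma ran_coord_perm_on: "ran (coord_perm_on p D) = (\<lambda>x. x \<circ> p) ` D"
  unfolding coord_perm_on_def ran_def by (auto split: if_splits)

lemma coord_perm_on_in_INinf:
  assumes p: "p permutes {1..n}" and D: "D \<subseteq> INpts n" "finite (INpts n - D)"
  shows "coord_perm_on p D \<in> INinf n"
proof -
  have "INpts n - (\<lambda>x. x \<circ> p) ` D \<subseteq> (\<lambda>x. x \<circ> p) ` (INpts n - D)"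
  proof
    fix y assume y: "y \<in> INpts n - (\<lambda>x. x \<circ> p) ` D"
    have "y = (y \<circ> Hilbert_Choice.inv p) \<circ> p"
      by (simp only: comp_permutes_inv_cancel[OF p])
    moreover have "y \<circ> Hilbert_Choice.inv p \<in> INpts n"
      using comp_permutes_in_INpts[OF permutes_inv[OF p]] y by blast
    moreover have "y \<circ> Hilbert_Choice.inv p \<notin> D"
      using y \<open>y = (y \<circ> Hilbert_Choice.inv p) \<circ> p\<close> by (metis DiffD2 rev_image_eqI)
    ultimately show "y \<in> (\<lambda>x. x \<circ> p) ` (INpts n - D)"
      by (intro rev_image_eqI) blast+
  qed
  then have "finite (INpts n - ran (coord_perm_on p D))"
    unfolding ran_coord_perm_on by (rule finite_subset) (use D(2) in blast)
  moreover have "ran (coord_perm_on p D) \<subseteq> INpts n"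
    using D(1) comp_permutes_in_INpts[OF p] unfolding ran_coord_perm_on by blast
  moreover have "inj_on (coord_perm_on p D) D"
    using comp_permutes_cancel[OF p] by (auto simp: inj_on_def coord_perm_on_def)
  moreover have "\<forall>x\<in>D. \<forall>y\<in>D. INdist n (the (coord_perm_on p D x)) (the (coord_perm_on p D y)) = INdist n x y"
    by (simp add: coord_perm_on_def INdist_eq_iff_sq_dist sq_dist_comp_permutes[OF p])
  ultimately show ?thesis
    using D unfolding INinf_def by simp
qed

lemma coord_perm_on_inject:
  assumes n: "1 \<le> n" and p: "p permutes {1..n}" and q: "q permutes {1..n}"
    and D: "finite (INpts n - D)" and eq: "coord_perm_on p D = coord_perm_on q D"
  shows "p = q"
proof
  fix j
  obtain K where K: "\<forall>y\<in>INpts n. \<forall>i\<in>{1..n}. K < y i \<longrightarrow> y \<in> D"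
    using finite_complement_contains_large[OF D] by blast
  \<comment> \<open>a point with pairwise distinct coordinates, far enough out to lie in D\<close>
  define z where "z = (\<lambda>j. if j \<in> {1..n} then K + j else 0)"
  have "z \<in> INpts n" "1 \<in> {1..n}" "K < z 1"
    using n by (auto simp: z_def INpts_def)
  then have "z \<in> D"
    using K by blast
  then have "z \<circ> p = z \<circ> q"
    using fun_cong[OF eq, of z] by (simp add: coord_perm_on_def)
  then have "z (p j) = z (q j)"
    by (metis comp_apply)
  show "p j = q j"
  proof (cases "j \<in> {1..n}")
    case True
    then have "p j \<in> {1..n}" "q j \<in> {1..n}"
      using permutes_in_image[OF p] permutes_in_image[OF q] by blast+
    with \<open>z (p j) = z (q j)\<close> show ?thesis
      by (simp add: z_def)
  next
    case False
    then show ?thesis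
      using permutes_not_in[OF p] permutes_not_in[OF q] by simp
  qed
qed

section \<open>Rigidity of cofinite isometries\<close>

lemma diag_pt_in_INpts: "1 \<le> L \<Longrightarrow> diag_pt n L \<in> INpts n"
  unfolding diag_pt_def INpts_def by auto

lemma exists_other_index:
  fixes n i :: nat
  assumes "2 \<le> n" "i \<in> {1..n}" obtains j where "j \<in> {1..n}" "j \<noteq> i"
proof (cases "i = 1")
  case True
  with assms show ?thesis by (intro that[of "2::nat"]) auto
next
  case False
  with assms show ?thesis by (intro that[of "1::nat"]) auto
qed

locale cofinite_isometry =
  fixes n :: nat and \<alpha> :: "(nat \<Rightarrow> nat) \<rightharpoonup> (nat \<Rightarrow> nat)"
  assumes two_le_n: "2 \<le> n" and in_INinf: "\<alpha> \<in> INinf n"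
begin

definition img :: "(nat \<Rightarrow> nat) \<Rightarrow> nat \<Rightarrow> nat" where
  "img x = the (\<alpha> x)"

lemma dom_subset: "dom \<alpha> \<subseteq> INpts n"
  using in_INinf by (simp add: INinf_def)

lemma img_in_INpts: "x \<in> dom \<alpha> \<Longrightarrow> img x \<in> INpts n"
  using in_INinf by (auto simp: INinf_def img_def ran_def)

lemma sq_dist_img: "x \<in> dom \<alpha> \<Longrightarrow> y \<in> dom \<alpha> \<Longrightarrow> sq_dist n (img x) (img y) = sq_dist n x y"
  using in_INinf by (simp add: INinf_def img_def INdist_eq_iff_sq_dist)

definition bound :: nat where
  "bound = (SOME K. \<forall>y\<in>INpts n. \<forall>i\<in>{1..n}. K < y i \<longrightarrow> y \<in> dom \<alpha> \<inter> ran \<alpha>)"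

lemma large_in_dom_ran:
  assumes "y \<in> INpts n" "i \<in> {1..n}" "bound < y i"
  shows "y \<in> dom \<alpha>" "y \<in> ran \<alpha>"
proof -
  have "finite (INpts n - dom \<alpha> \<inter> ran \<alpha>)"
    using in_INinf unfolding Diff_Int by (simp add: INinf_def)
  then have "\<forall>y\<in>INpts n. \<forall>i\<in>{1..n}. bound < y i \<longrightarrow> y \<in> dom \<alpha> \<inter> ran \<alpha>"
    unfolding bound_def by (rule someI_ex[OF finite_complement_contains_large])
  with assms show "y \<in> dom \<alpha>" "y \<in> ran \<alpha>"
    by blast+
qed

definition base :: "nat \<Rightarrow> nat" where
  "base = diag_pt n (bound + 1)"

definition step :: "nat \<Rightarrow> nat \<Rightarrow> nat" where
  "step i = base(i := bound + 2)"

lemma base_in_dom: "base \<in> dom \<alpha>"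
  using two_le_n diag_pt_in_INpts[of "bound + 1" n]
  by (intro large_in_dom_ran(1)[of _ 1]) (auto simp: base_def diag_pt_def)

lemma step_in_dom: "i \<in> {1..n} \<Longrightarrow> step i \<in> dom \<alpha>"
  using diag_pt_upd_in_INpts[of "bound + 1" "bound + 2" i n]
  by (intro large_in_dom_ran(1)[of _ i]) (auto simp: step_def base_def)

lemma sq_dist_step_base:
  assumes "i \<in> {1..n}" shows "sq_dist n (step i) base = 1"
proof -
  have "sq_dist n (step i) base - sq_dist n (step i) (step i)
      = (int (step i i) - int (base i))^2 - (int (step i i) - int (step i i))^2"
    using assms by (intro sq_dist_diff_upd) (auto simp: step_def)
  with assms show ?thesis
    by (simp add: step_def base_def diag_pt_def)
qed

definition unit_step_image :: "nat \<Rightarrow> nat \<Rightarrow> bool" where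
  "unit_step_image i j \<longleftrightarrow> j \<in> {1..n}
     \<and> (int (img (step i) j) - int (img base j) = 1 \<or> int (img (step i) j) - int (img base j) = -1)
     \<and> (\<forall>k\<in>{1..n}. k \<noteq> j \<longrightarrow> img (step i) k = img base k)"

lemma ex_unit_step_image:
  assumes i: "i \<in> {1..n}" shows "\<exists>j. unit_step_image i j"
proof -
  define h where "h k = int (img (step i) k) - int (img base k)" for k
  have "(\<Sum>k\<in>{1..n}. (h k)^2) = 1"
    using sq_dist_img[OF step_in_dom[OF i] base_in_dom] sq_dist_step_base[OF i]
    by (simp add: sq_dist_def h_def)
  then obtain j where "j \<in> {1..n}" "h j = 1 \<or> h j = -1" "\<forall>k\<in>{1..n}. k \<noteq> j \<longrightarrow> h k = 0"
    using sum_power2_int_eq_1[of "{1..n}" h] by auto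
  then have "unit_step_image i j"
    unfolding unit_step_image_def h_def by auto
  then show ?thesis ..
qed

definition axis :: "nat \<Rightarrow> nat" where
  "axis i = (if i \<in> {1..n} then SOME j. unit_step_image i j else i)"

definition orientation :: "nat \<Rightarrow> int" where
  "orientation i = int (img (step i) (axis i)) - int (img base (axis i))"

lemma axis_props:
  assumes i: "i \<in> {1..n}"
  shows "axis i \<in> {1..n}" "orientation i = 1 \<or> orientation i = -1"
    and "\<And>k. k \<in> {1..n} \<Longrightarrow> k \<noteq> axis i \<Longrightarrow> img (step i) k = img base k"
proof -
  have "unit_step_image i (axis i)"
    using someI_ex[OF ex_unit_step_image[OF i]] i by (simp add: axis_def)
  then show "axis i \<in> {1..n}" "orientation i = 1 \<or> orientation i = -1"
    and "\<And>k. k \<in> {1..n} \<Longrightarrow> k \<noteq> axis i \<Longrightarrow> img (step i) k = img base k"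
    unfolding unit_step_image_def orientation_def by blast+
qed

lemma img_coord_axis:
  assumes x: "x \<in> dom \<alpha>" and i: "i \<in> {1..n}"
  shows "int (img x (axis i)) = int (img base (axis i)) + orientation i * (int (x i) - int bound - 1)"
proof -
  \<comment> \<open>compare the distances from x to step i and to base, before and after applying \<alpha>\<close>
  have "sq_dist n (img x) (img (step i)) - sq_dist n (img x) (img base)
      = (int (img x (axis i)) - int (img (step i) (axis i)))^2 - (int (img x (axis i)) - int (img base (axis i)))^2"
    using axis_props[OF i] by (intro sq_dist_diff_upd) auto
  moreover have "sq_dist n x (step i) - sq_dist n x base
      = (int (x i) - int (step i i))^2 - (int (x i) - int (base i))^2"
    using i by (intro sq_dist_diff_upd) (auto simp: step_def)
  moreover have "int (step i i) = int bound + 2" "int (base i) = int bound + 1"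
    using i by (auto simp: step_def base_def diag_pt_def)
  moreover have "int (img (step i) (axis i)) = int (img base (axis i)) + orientation i"
    by (simp add: orientation_def)
  ultimately have "(int (img x (axis i)) - (int (img base (axis i)) + orientation i))^2
        - (int (img x (axis i)) - int (img base (axis i)))^2
      = (int (x i) - (int bound + 2))^2 - (int (x i) - (int bound + 1))^2"
    using sq_dist_img[OF x step_in_dom[OF i]] sq_dist_img[OF x base_in_dom] by simp
  with axis_props(2)[OF i] show ?thesis
    by (rule unit_shift_square_diff)
qed

lemma inj_on_axis: "inj_on axis {1..n}"
proof (rule inj_onI, rule ccontr)
  fix i i' assume i: "i \<in> {1..n}" and i': "i' \<in> {1..n}" and eq: "axis i = axis i'" and "i \<noteq> i'"
  then have "step i i' = bound + 1"
    by (simp add: step_def base_def diag_pt_def)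
  then have "img (step i) (axis i) = img base (axis i)"
    using img_coord_axis[OF step_in_dom[OF i] i'] eq by simp
  then show False
    using axis_props(2)[OF i] by (simp add: orientation_def)
qed

lemma axis_permutes: "axis permutes {1..n}"
proof (rule bij_imp_permutes)
  have "axis ` {1..n} = {1..n}"
    by (rule endo_inj_surj) (use axis_props(1) inj_on_axis in auto)
  then show "bij_betw axis {1..n} {1..n}"
    using inj_on_axis by (simp add: bij_betw_def)
qed (auto simp: axis_def)

lemma orientation_eq_1:
  assumes i: "i \<in> {1..n}" shows "orientation i = 1"
proof (rule ccontr)
  assume "orientation i \<noteq> 1"
  then have neg: "orientation i = -1"
    using axis_props(2)[OF i] by simp
  \<comment> \<open>moving far enough along the i-th axis would then produce a zero coordinate\<close>
  define L where "L = bound + 1 + img base (axis i)"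
  have x: "diag_pt n L \<in> dom \<alpha>"
    using i diag_pt_in_INpts[of L n] by (intro large_in_dom_ran(1)[of _ i]) (auto simp: L_def diag_pt_def)
  have "1 \<le> img (diag_pt n L) (axis i)"
    using img_in_INpts[OF x] axis_props(1)[OF i] by (simp add: INpts_def)
  moreover have "int (img (diag_pt n L) (axis i)) = 0"
    using img_coord_axis[OF x i] neg i by (simp add: L_def diag_pt_def)
  ultimately show False
    by simp
qed

lemma img_coord_axis_shift:
  "x \<in> dom \<alpha> \<Longrightarrow> i \<in> {1..n} \<Longrightarrow> int (img x (axis i)) = int (img base (axis i)) + int (x i) - int bound - 1"
  using img_coord_axis orientation_eq_1 by simp

lemma img_base_axis_ge:
  assumes i: "i \<in> {1..n}" shows "int bound + 1 \<le> int (img base (axis i))"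
proof -
  obtain j where j: "j \<in> {1..n}" "j \<noteq> i"
    using exists_other_index[OF two_le_n i] .
  define z where "z = base(i := 1)"
  have "z \<in> dom \<alpha>"
    using diag_pt_upd_in_INpts[of "bound + 1" 1 i n] i j
    by (intro large_in_dom_ran(1)[of _ j]) (auto simp: z_def base_def diag_pt_def)
  then have "1 \<le> img z (axis i)" "int (img z (axis i)) = int (img base (axis i)) - int bound"
    using img_in_INpts img_coord_axis_shift[of z i] axis_props(1)[OF i] i
    by (auto simp: INpts_def z_def)
  then show ?thesis
    by linarith
qed

lemma img_base_axis_le:
  assumes i: "i \<in> {1..n}" shows "int (img base (axis i)) \<le> int bound + 1"
proof -
  obtain j where j: "j \<in> {1..n}" "j \<noteq> i"
    using exists_other_index[OF two_le_n i] .
  have "axis j \<noteq> axis i"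
    using inj_onD[OF inj_on_axis _ j(1) i] j(2) by blast
  \<comment> \<open>a point of the range with a coordinate 1 in direction axis i has a preimage\<close>
  define z where "z = base(axis i := 1)"
  have "z \<in> ran \<alpha>"
    using diag_pt_upd_in_INpts[of "bound + 1" 1 "axis i" n] axis_props(1) i j \<open>axis j \<noteq> axis i\<close>
    by (intro large_in_dom_ran(2)[of _ "axis j"]) (auto simp: z_def base_def diag_pt_def)
  then obtain y where "\<alpha> y = Some z"
    by (auto simp: ran_def)
  then have y: "y \<in> dom \<alpha>" "img y = z"
    by (auto simp: img_def)
  then have "1 \<le> y i" "1 = int (img base (axis i)) + int (y i) - int bound - 1"
    using dom_subset i img_coord_axis_shift[OF y(1) i] by (auto simp: INpts_def z_def)
  then show ?thesis
    by linarith
qed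

lemma img_coord_axis_eq:
  assumes "x \<in> dom \<alpha>" "i \<in> {1..n}" shows "img x (axis i) = x i"
  using img_coord_axis_shift[OF assms] img_base_axis_ge[OF assms(2)] img_base_axis_le[OF assms(2)]
  by linarith

lemma eq_coord_perm_on: "\<alpha> = coord_perm_on (Hilbert_Choice.inv axis) (dom \<alpha>)"
proof
  fix x
  show "\<alpha> x = coord_perm_on (Hilbert_Choice.inv axis) (dom \<alpha>) x"
  proof (cases "x \<in> dom \<alpha>")
    case False
    then show ?thesis
      by (auto simp: coord_perm_on_def)
  next
    case x: True
    have "img x j = x (Hilbert_Choice.inv axis j)" for j
    proof (cases "j \<in> {1..n}")
      case True
      then have "Hilbert_Choice.inv axis j \<in> {1..n}" "axis (Hilbert_Choice.inv axis j) = j"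
        using permutes_in_image[OF permutes_inv[OF axis_permutes]] permutes_inverses(1)[OF axis_permutes]
        by auto
      then show ?thesis
        using img_coord_axis_eq[OF x] by metis
    next
      case False
      then show ?thesis
        using img_in_INpts[OF x] x dom_subset permutes_not_in[OF permutes_inv[OF axis_permutes] False]
        by (auto simp: INpts_def)
    qed
    then have "img x = x \<circ> Hilbert_Choice.inv axis"
      by (simp add: fun_eq_iff)
    with x show ?thesis
      by (auto simp: coord_perm_on_def img_def)
  qed
qed

end

lemma INinf_eq_coord_perm_on:
  assumes "2 \<le> n" "\<alpha> \<in> INinf n"
  shows "\<exists>p. p permutes {1..n} \<and> \<alpha> = coord_perm_on p (dom \<alpha>)"
proof -
  interpret cofinite_isometry n \<alpha>
    using assms by unfold_locales
  show ?thesis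
    using eq_coord_perm_on permutes_inv[OF axis_permutes] by blast
qed

section \<open>The permutation of an element and the least group congruence\<close>

lemma INmul_coord_perm_on:
  "INmul (coord_perm_on p D) (coord_perm_on q E) = coord_perm_on (p \<circ> q) {x \<in> D. x \<circ> p \<in> E}"
  unfolding INmul_def coord_perm_on_def map_comp_def by (auto simp: fun_eq_iff o_assoc)

lemma cofinite_comp_preimage:
  assumes p: "p permutes {1..n}" and D: "finite (INpts n - D)" and E: "finite (INpts n - E)"
  shows "finite (INpts n - {x \<in> D. x \<circ> p \<in> E})"
proof -
  have "INpts n - {x \<in> D. x \<circ> p \<in> E}
      \<subseteq> (INpts n - D) \<union> (\<lambda>y. y \<circ> Hilbert_Choice.inv p) ` (INpts n - E)"
  proof
    fix x assume x: "x \<in> INpts n - {x \<in> D. x \<circ> p \<in> E}"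
    show "x \<in> (INpts n - D) \<union> (\<lambda>y. y \<circ> Hilbert_Choice.inv p) ` (INpts n - E)"
    proof (cases "x \<in> D")
      case True
      then have "x \<circ> p \<in> INpts n - E"
        using x comp_permutes_in_INpts[OF p] by blast
      moreover have "x = (x \<circ> p) \<circ> Hilbert_Choice.inv p"
        by (simp add: o_assoc[symmetric] permutes_inv_o(1)[OF p])
      ultimately show ?thesis
        by (intro UnI2 rev_image_eqI)
    qed (use x in blast)
  qed
  then show ?thesis
    by (rule finite_subset) (intro finite_UnI finite_imageI D E)
qed

lemma INid_eq_coord_perm_on: "INid n = coord_perm_on id (INpts n)"
  unfolding INid_def coord_perm_on_def by auto

lemma INid_in_INinf: "INid n \<in> INinf n"
  unfolding INid_eq_coord_perm_on by (rule coord_perm_on_in_INinf) auto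

lemma coord_perm_on_id_in_INidem:
  assumes "E \<subseteq> INpts n" "finite (INpts n - E)" shows "coord_perm_on id E \<in> INidem n"
  using coord_perm_on_in_INinf[OF permutes_id assms] by (simp add: INidem_def INmul_coord_perm_on)

lemma INinf_dom_ran:
  assumes "\<alpha> \<in> INinf n"
  shows "dom \<alpha> \<subseteq> INpts n" "finite (INpts n - dom \<alpha>)" "ran \<alpha> \<subseteq> INpts n" "finite (INpts n - ran \<alpha>)"
  using assms unfolding INinf_def by auto

definition perm_of :: "nat \<Rightarrow> ((nat \<Rightarrow> nat) \<rightharpoonup> (nat \<Rightarrow> nat)) \<Rightarrow> nat \<Rightarrow> nat" where
  "perm_of n \<alpha> = (THE p. p permutes {1..n} \<and> \<alpha> = coord_perm_on p (dom \<alpha>))"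

definition perm_class :: "nat \<Rightarrow> (nat \<Rightarrow> nat) \<Rightarrow> ((nat \<Rightarrow> nat) \<rightharpoonup> (nat \<Rightarrow> nat)) set" where
  "perm_class n p = {\<beta> \<in> INinf n. perm_of n \<beta> = p}"

context
  fixes n :: nat
  assumes two_le_n: "2 \<le> n"
begin

lemma perm_of_props:
  assumes "\<alpha> \<in> INinf n"
  shows "perm_of n \<alpha> permutes {1..n}" "\<alpha> = coord_perm_on (perm_of n \<alpha>) (dom \<alpha>)"
proof -
  obtain p where p: "p permutes {1..n}" "\<alpha> = coord_perm_on p (dom \<alpha>)"
    using INinf_eq_coord_perm_on[OF two_le_n assms] by blast
  have "q = p" if "q permutes {1..n} \<and> \<alpha> = coord_perm_on q (dom \<alpha>)" for q
  proof (rule coord_perm_on_inject[OF _ conjunct1[OF that] p(1) INinf_dom_ran(2)[OF assms]])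
    show "1 \<le> n"
      using two_le_n by simp
    show "coord_perm_on q (dom \<alpha>) = coord_perm_on p (dom \<alpha>)"
      using conjunct2[OF that] p(2) by (rule trans[OF sym])
  qed
  with conjI[OF p] have "\<exists>!p. p permutes {1..n} \<and> \<alpha> = coord_perm_on p (dom \<alpha>)"
    by (rule ex1I)
  then have "perm_of n \<alpha> permutes {1..n} \<and> \<alpha> = coord_perm_on (perm_of n \<alpha>) (dom \<alpha>)"
    unfolding perm_of_def by (rule theI')
  then show "perm_of n \<alpha> permutes {1..n}" "\<alpha> = coord_perm_on (perm_of n \<alpha>) (dom \<alpha>)"
    by (rule conjunct1, rule conjunct2)
qed

lemma perm_of_coord_perm_on:
  assumes p: "p permutes {1..n}" and D: "D \<subseteq> INpts n" "finite (INpts n - D)"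
  shows "perm_of n (coord_perm_on p D) = p"
proof -
  have \<alpha>: "coord_perm_on p D \<in> INinf n"
    using p D by (rule coord_perm_on_in_INinf)
  note eq = perm_of_props(2)[OF \<alpha>, unfolded dom_coord_perm_on]
  show ?thesis
    using two_le_n eq[symmetric] by (intro coord_perm_on_inject[OF _ perm_of_props(1)[OF \<alpha>] p D(2)]) simp_all
qed

lemma INmul_closed_perm_of:
  assumes "\<alpha> \<in> INinf n" "\<beta> \<in> INinf n"
  shows "INmul \<alpha> \<beta> \<in> INinf n" "perm_of n (INmul \<alpha> \<beta>) = perm_of n \<alpha> \<circ> perm_of n \<beta>"
proof -
  let ?p = "perm_of n \<alpha>" and ?q = "perm_of n \<beta>" and ?D = "{x \<in> dom \<alpha>. x \<circ> perm_of n \<alpha> \<in> dom \<beta>}"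
  have eq: "INmul \<alpha> \<beta> = coord_perm_on (?p \<circ> ?q) ?D"
    using perm_of_props(2)[OF assms(1)] perm_of_props(2)[OF assms(2)] INmul_coord_perm_on by metis
  have pq: "?p \<circ> ?q permutes {1..n}"
    using perm_of_props(1)[OF assms(1)] perm_of_props(1)[OF assms(2)] by (rule permutes_compose[rotated])
  have D1: "?D \<subseteq> INpts n"
    using INinf_dom_ran(1)[OF assms(1)] by blast
  have D2: "finite (INpts n - ?D)"
    using cofinite_comp_preimage[OF perm_of_props(1)[OF assms(1)] INinf_dom_ran(2)[OF assms(1)]
      INinf_dom_ran(2)[OF assms(2)]] .
  show "INmul \<alpha> \<beta> \<in> INinf n" "perm_of n (INmul \<alpha> \<beta>) = ?p \<circ> ?q"
    unfolding eq using coord_perm_on_in_INinf[OF pq D1 D2] perm_of_coord_perm_on[OF pq D1 D2] by auto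
qed

lemma comp_perm_of_in_ran_iff:
  assumes "\<alpha> \<in> INinf n" "x \<in> INpts n"
  shows "x \<circ> perm_of n \<alpha> \<in> ran \<alpha> \<longleftrightarrow> x \<in> dom \<alpha>"
proof -
  have "ran \<alpha> = (\<lambda>x. x \<circ> perm_of n \<alpha>) ` dom \<alpha>"
    using perm_of_props(2)[OF assms(1)] ran_coord_perm_on by metis
  then show ?thesis
    using comp_permutes_cancel[OF perm_of_props(1)[OF assms(1)]] by auto
qed

lemma perm_of_INid: "perm_of n (INid n) = id"
  unfolding INid_eq_coord_perm_on by (rule perm_of_coord_perm_on) auto

lemma perm_of_idem:
  assumes "e \<in> INidem n" shows "perm_of n e = id"
proof -
  have e: "e \<in> INinf n" "INmul e e = e"
    using assms by (auto simp: INidem_def)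
  then have "perm_of n e \<circ> perm_of n e = perm_of n e"
    using INmul_closed_perm_of(2)[OF e(1) e(1)] by simp
  then have "perm_of n e (perm_of n e x) = perm_of n e x" for x
    by (metis comp_apply)
  then show ?thesis
    using injD[OF permutes_inj[OF perm_of_props(1)[OF e(1)]]] by (auto simp: fun_eq_iff)
qed

lemma INunits_iff:
  "u \<in> INunits n \<longleftrightarrow> (\<exists>p. p permutes {1..n} \<and> u = coord_perm_on p (INpts n))"
proof
  assume u: "u \<in> INunits n"
  then obtain v where u_in: "u \<in> INinf n" and "INmul u v = INid n"
    unfolding INunits_def by auto
  have "x \<in> dom u" if "x \<in> INpts n" for x
  proof -
    have "(v \<circ>\<^sub>m u) x = Some x"
      using \<open>INmul u v = INid n\<close> that by (simp add: INmul_def INid_def)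
    then show ?thesis
      by (auto simp: map_comp_def split: option.splits)
  qed
  then have "INpts n \<subseteq> dom u"
    by blast
  then have "dom u = INpts n"
    using INinf_dom_ran(1)[OF u_in] by blast
  then show "\<exists>p. p permutes {1..n} \<and> u = coord_perm_on p (INpts n)"
    using perm_of_props[OF u_in] by metis
next
  assume "\<exists>p. p permutes {1..n} \<and> u = coord_perm_on p (INpts n)"
  then obtain p where p: "p permutes {1..n}" and u: "u = coord_perm_on p (INpts n)"
    by blast
  let ?v = "coord_perm_on (Hilbert_Choice.inv p) (INpts n)"
  have inv_p: "Hilbert_Choice.inv p permutes {1..n}"
    using p by (rule permutes_inv)
  have "{x \<in> INpts n. x \<circ> p \<in> INpts n} = INpts n"
    "{x \<in> INpts n. x \<circ> Hilbert_Choice.inv p \<in> INpts n} = INpts n"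
    using comp_permutes_in_INpts[OF p] comp_permutes_in_INpts[OF inv_p] by auto
  then have "INmul u ?v = INid n" "INmul ?v u = INid n"
    unfolding u INmul_coord_perm_on INid_eq_coord_perm_on
    by (simp_all add: permutes_inv_o[OF p])
  moreover have "u \<in> INinf n" "?v \<in> INinf n"
    unfolding u using coord_perm_on_in_INinf[OF p] coord_perm_on_in_INinf[OF inv_p] by auto
  ultimately show "u \<in> INunits n"
    unfolding INunits_def by blast
qed

lemma unit_idem_decomp:
  assumes "\<alpha> \<in> INinf n"
  shows "coord_perm_on (perm_of n \<alpha>) (INpts n) \<in> INunits n"
    and "coord_perm_on id (ran \<alpha>) \<in> INidem n"
    and "\<alpha> = INmul (coord_perm_on (perm_of n \<alpha>) (INpts n)) (coord_perm_on id (ran \<alpha>))"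
proof -
  show "coord_perm_on (perm_of n \<alpha>) (INpts n) \<in> INunits n"
    using INunits_iff perm_of_props(1)[OF assms] by blast
  show "coord_perm_on id (ran \<alpha>) \<in> INidem n"
    using INinf_dom_ran[OF assms] by (intro coord_perm_on_id_in_INidem)
  have "{x \<in> INpts n. x \<circ> perm_of n \<alpha> \<in> ran \<alpha>} = dom \<alpha>"
    using comp_perm_of_in_ran_iff[OF assms] INinf_dom_ran(1)[OF assms] by auto
  then have "INmul (coord_perm_on (perm_of n \<alpha>) (INpts n)) (coord_perm_on id (ran \<alpha>))
      = coord_perm_on (perm_of n \<alpha>) (dom \<alpha>)"
    by (simp add: INmul_coord_perm_on)
  then show "\<alpha> = INmul (coord_perm_on (perm_of n \<alpha>) (INpts n)) (coord_perm_on id (ran \<alpha>))"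
    using perm_of_props(2)[OF assms] by metis
qed

lemma unit_idem_decomp_unique:
  assumes u: "u \<in> INunits n" and e: "e \<in> INidem n" and \<alpha>: "\<alpha> = INmul u e"
  shows "u = coord_perm_on (perm_of n \<alpha>) (INpts n)"
proof -
  obtain q where q: "q permutes {1..n}" "u = coord_perm_on q (INpts n)"
    using u INunits_iff by blast
  have "u \<in> INinf n" "e \<in> INinf n"
    using u e by (auto simp: INunits_def INidem_def)
  then have "perm_of n \<alpha> = perm_of n u \<circ> perm_of n e"
    using INmul_closed_perm_of(2) \<alpha> by simp
  also have "\<dots> = q"
    using perm_of_idem[OF e] perm_of_coord_perm_on[OF q(1), of "INpts n"] q(2) by simp
  finally show ?thesis
    using q by simp
qed

lemma ex1_unit_idem_decomp:
  assumes "\<alpha> \<in> INinf n"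
  shows "\<exists>!u. u \<in> INunits n \<and> (\<exists>e\<in>INidem n. \<alpha> = INmul u e)"
proof (rule ex1I)
  show "coord_perm_on (perm_of n \<alpha>) (INpts n) \<in> INunits n
      \<and> (\<exists>e\<in>INidem n. \<alpha> = INmul (coord_perm_on (perm_of n \<alpha>) (INpts n)) e)"
    using unit_idem_decomp[OF assms] by blast
  fix u assume "u \<in> INunits n \<and> (\<exists>e\<in>INidem n. \<alpha> = INmul u e)"
  then show "u = coord_perm_on (perm_of n \<alpha>) (INpts n)"
    by (elim conjE bexE) (rule unit_idem_decomp_unique)
qed

lemma INsigma_eq:
  assumes "\<alpha> \<in> INinf n" shows "INsigma n \<alpha> = coord_perm_on (perm_of n \<alpha>) (INpts n)"
  unfolding INsigma_def
  by (rule the1_equality[OF ex1_unit_idem_decomp[OF assms]]) (use unit_idem_decomp[OF assms] in blast)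

lemma perm_of_INsigma:
  assumes "\<alpha> \<in> INinf n" shows "perm_of n (INsigma n \<alpha>) = perm_of n \<alpha>"
  unfolding INsigma_eq[OF assms] using perm_of_props(1)[OF assms] by (rule perm_of_coord_perm_on) auto

lemma INsigma_eq_iff:
  assumes "\<alpha> \<in> INinf n" "\<beta> \<in> INinf n"
  shows "INsigma n \<alpha> = INsigma n \<beta> \<longleftrightarrow> perm_of n \<alpha> = perm_of n \<beta>"
  using perm_of_INsigma[OF assms(1)] perm_of_INsigma[OF assms(2)] INsigma_eq[OF assms(1)] INsigma_eq[OF assms(2)]
  by metis

lemma INmul_coord_perm_on_id:
  assumes "\<alpha> \<in> INinf n"
  shows "INmul \<alpha> (coord_perm_on id E) = coord_perm_on (perm_of n \<alpha>) {x \<in> dom \<alpha>. x \<circ> perm_of n \<alpha> \<in> E}"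
proof -
  have "INmul (coord_perm_on (perm_of n \<alpha>) (dom \<alpha>)) (coord_perm_on id E)
      = coord_perm_on (perm_of n \<alpha>) {x \<in> dom \<alpha>. x \<circ> perm_of n \<alpha> \<in> E}"
    by (simp add: INmul_coord_perm_on)
  then show ?thesis
    by (simp only: perm_of_props(2)[OF assms, symmetric])
qed

lemma Cmg_iff_perm_of_eq:
  assumes \<alpha>: "\<alpha> \<in> INinf n" and \<beta>: "\<beta> \<in> INinf n"
  shows "(\<alpha>, \<beta>) \<in> Cmg n \<longleftrightarrow> perm_of n \<alpha> = perm_of n \<beta>"
proof
  assume "(\<alpha>, \<beta>) \<in> Cmg n"
  then obtain e where e: "e \<in> INidem n" "INmul \<alpha> e = INmul \<beta> e"
    unfolding Cmg_def by auto
  have "e \<in> INinf n"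
    using e(1) by (simp add: INidem_def)
  have "perm_of n \<alpha> = perm_of n (INmul \<alpha> e)"
    using INmul_closed_perm_of(2)[OF \<alpha> \<open>e \<in> INinf n\<close>] perm_of_idem[OF e(1)] by simp
  also have "\<dots> = perm_of n \<beta>"
    using INmul_closed_perm_of(2)[OF \<beta> \<open>e \<in> INinf n\<close>] perm_of_idem[OF e(1)] e(2) by simp
  finally show "perm_of n \<alpha> = perm_of n \<beta>" .
next
  assume eq: "perm_of n \<alpha> = perm_of n \<beta>"
  \<comment> \<open>restricting both maps to the common part of their ranges identifies them\<close>
  define E where "E = ran \<alpha> \<inter> ran \<beta>"
  have "INpts n - E = (INpts n - ran \<alpha>) \<union> (INpts n - ran \<beta>)"
    unfolding E_def by blast
  then have e: "coord_perm_on id E \<in> INidem n"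
    using INinf_dom_ran[OF \<alpha>] INinf_dom_ran[OF \<beta>]
    by (intro coord_perm_on_id_in_INidem) (auto simp: E_def)
  have "{x \<in> dom \<alpha>. x \<circ> perm_of n \<alpha> \<in> E} = dom \<alpha> \<inter> dom \<beta>"
    "{x \<in> dom \<beta>. x \<circ> perm_of n \<beta> \<in> E} = dom \<alpha> \<inter> dom \<beta>"
    using comp_perm_of_in_ran_iff[OF \<alpha>] comp_perm_of_in_ran_iff[OF \<beta>]
      INinf_dom_ran(1)[OF \<alpha>] INinf_dom_ran(1)[OF \<beta>] eq
    unfolding E_def by auto
  then have "INmul \<alpha> (coord_perm_on id E) = INmul \<beta> (coord_perm_on id E)"
    using INmul_coord_perm_on_id[OF \<alpha>, of E] INmul_coord_perm_on_id[OF \<beta>, of E] eq by simp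
  then show "(\<alpha>, \<beta>) \<in> Cmg n"
    unfolding Cmg_def using \<alpha> \<beta> e by blast
qed

lemma Cmg_class_eq:
  assumes "\<alpha> \<in> INinf n" shows "Cmg n `` {\<alpha>} = perm_class n (perm_of n \<alpha>)"
proof -
  have "\<beta> \<in> Cmg n `` {\<alpha>} \<longleftrightarrow> \<beta> \<in> INinf n \<and> (\<alpha>, \<beta>) \<in> Cmg n" for \<beta>
    by (auto simp: Cmg_def)
  also have "\<dots> \<beta> \<longleftrightarrow> \<beta> \<in> perm_class n (perm_of n \<alpha>)" for \<beta>
    using Cmg_iff_perm_of_eq[OF assms, of \<beta>] by (auto simp: perm_class_def)
  finally show ?thesis
    by blast
qed

lemma coord_perm_on_in_perm_class:
  assumes "p permutes {1..n}" shows "coord_perm_on p (INpts n) \<in> perm_class n p"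
  unfolding perm_class_def using coord_perm_on_in_INinf[OF assms] perm_of_coord_perm_on[OF assms]
  by auto

lemma carrier_INquot: "carrier (INquot n) = perm_class n ` {p. p permutes {1..n}}"
proof -
  have "Cmg n `` {\<alpha>} \<in> perm_class n ` {p. p permutes {1..n}}" if "\<alpha> \<in> INinf n" for \<alpha>
    using Cmg_class_eq[OF that] perm_of_props(1)[OF that] by blast
  moreover have "perm_class n p \<in> INinf n // Cmg n" if "p permutes {1..n}" for p
  proof -
    let ?u = "coord_perm_on p (INpts n)"
    have "?u \<in> INinf n" "perm_of n ?u = p"
      using coord_perm_on_in_perm_class[OF that] by (auto simp: perm_class_def)
    then show ?thesis
      using Cmg_class_eq quotientI by metis
  qed
  ultimately show ?thesis
    unfolding INquot_def by (auto elim!: quotientE)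
qed

lemma mult_INquot:
  assumes p: "p permutes {1..n}" and q: "q permutes {1..n}"
  shows "mult (INquot n) (perm_class n p) (perm_class n q) = perm_class n (p \<circ> q)"
proof -
  define x where "x = (SOME x. x \<in> perm_class n p)"
  define y where "y = (SOME y. y \<in> perm_class n q)"
  have "x \<in> perm_class n p" "y \<in> perm_class n q"
    unfolding x_def y_def
    by (rule someI[of "\<lambda>x. x \<in> perm_class n p", OF coord_perm_on_in_perm_class[OF p]],
        rule someI[of "\<lambda>x. x \<in> perm_class n q", OF coord_perm_on_in_perm_class[OF q]])
  then have xy: "x \<in> INinf n" "y \<in> INinf n" "perm_of n x = p" "perm_of n y = q"
    by (auto simp: perm_class_def)
  have "mult (INquot n) (perm_class n p) (perm_class n q) = Cmg n `` {INmul x y}"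
    by (simp add: INquot_def x_def y_def)
  also have "\<dots> = perm_class n (perm_of n (INmul x y))"
    by (rule Cmg_class_eq[OF INmul_closed_perm_of(1)[OF xy(1,2)]])
  also have "\<dots> = perm_class n (p \<circ> q)"
    by (simp add: INmul_closed_perm_of(2)[OF xy(1,2)] xy(3,4))
  finally show ?thesis .
qed

lemma perm_class_inject:
  assumes "p permutes {1..n}" "perm_class n p = perm_class n q" shows "p = q"
proof -
  have "coord_perm_on p (INpts n) \<in> perm_class n q"
    using coord_perm_on_in_perm_class[OF assms(1)] assms(2) by simp
  then show ?thesis
    using coord_perm_on_in_perm_class[OF assms(1)] by (simp add: perm_class_def)
qed

lemma perm_class_iso: "perm_class n \<in> iso (sym_group n) (INquot n)"
proof -
  have "perm_class n \<in> hom (sym_group n) (INquot n)"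
  proof (rule homI)
    fix p assume "p \<in> carrier (sym_group n)"
    then show "perm_class n p \<in> carrier (INquot n)"
      by (simp add: sym_group_def carrier_INquot)
  next
    fix p q assume "p \<in> carrier (sym_group n)" "q \<in> carrier (sym_group n)"
    then show "perm_class n (p \<otimes>\<^bsub>sym_group n\<^esub> q) = perm_class n p \<otimes>\<^bsub>INquot n\<^esub> perm_class n q"
      by (simp add: sym_group_def mult_INquot)
  qed
  moreover have "inj_on (perm_class n) {p. p permutes {1..n}}"
    by (rule inj_onI) (simp add: perm_class_inject)
  ultimately show ?thesis
    by (simp add: iso_def bij_betw_def sym_group_def carrier_INquot)
qed

lemma group_INquot: "group (INquot n)"
proof -
  have "perm_class n \<in> hom (sym_group n) (INquot n)"
    using perm_class_iso by (simp add: iso_def)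
  from group.hom_imp_img_group[OF sym_group_is_group this]
  have "group (INquot n\<lparr>carrier := carrier (INquot n), one := Cmg n `` {INid n}\<rparr>)"
    using Cmg_class_eq[OF INid_in_INinf] perm_of_INid by (simp add: sym_group_def carrier_INquot)
  then show ?thesis
    by (simp add: INquot_def)
qed

lemma perm_of_units_iso: "perm_of n \<in> iso (INunits_grp n) (sym_group n)"
proof -
  have units: "carrier (INunits_grp n) = (\<lambda>p. coord_perm_on p (INpts n)) ` {p. p permutes {1..n}}"
    unfolding INunits_grp_def using INunits_iff by auto
  have perm_of: "perm_of n (coord_perm_on p (INpts n)) = p" if "p permutes {1..n}" for p
    using that by (rule perm_of_coord_perm_on) auto
  have "perm_of n \<in> hom (INunits_grp n) (sym_group n)"
  proof (rule homI)
    fix u assume "u \<in> carrier (INunits_grp n)"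
    then show "perm_of n u \<in> carrier (sym_group n)"
      using perm_of_props(1) by (auto simp: INunits_grp_def INunits_def sym_group_def)
  next
    fix u v assume "u \<in> carrier (INunits_grp n)" "v \<in> carrier (INunits_grp n)"
    then show "perm_of n (u \<otimes>\<^bsub>INunits_grp n\<^esub> v) = perm_of n u \<otimes>\<^bsub>sym_group n\<^esub> perm_of n v"
      using INmul_closed_perm_of(2) by (auto simp: INunits_grp_def INunits_def sym_group_def)
  qed
  moreover have "bij_betw (perm_of n) (carrier (INunits_grp n)) (carrier (sym_group n))"
    unfolding units
    by (rule bij_betw_byWitness[where f' = "\<lambda>p. coord_perm_on p (INpts n)"])
      (auto simp: perm_of sym_group_def)
  ultimately show ?thesis
    by (simp add: iso_def)
qed

end

theorem theorem3p7:
  fixes n :: nat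
  assumes "n \<ge> 2"
  shows "(\<forall>\<alpha>\<in>INinf n. \<exists>!u. u \<in> INunits n \<and> (\<exists>e\<in>INidem n. \<alpha> = INmul u e))
    \<and> (\<forall>\<alpha>\<in>INinf n. \<forall>\<beta>\<in>INinf n. (\<alpha>, \<beta>) \<in> Cmg n \<longleftrightarrow> INsigma n \<alpha> = INsigma n \<beta>)
    \<and> group (INquot n)
    \<and> INquot n \<cong> sym_group n
    \<and> (\<exists>\<phi> \<psi>. \<phi> \<in> iso (INunits_grp n) (sym_group n)
          \<and> \<psi> \<in> iso (INquot n) (sym_group n)
          \<and> (\<forall>\<alpha>\<in>INinf n. \<psi> (Cmg n `` {\<alpha>}) = \<phi> (INsigma n \<alpha>)))"
proof -
  let ?\<psi> = "inv_into (carrier (sym_group n)) (perm_class n)"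
  have \<psi>: "?\<psi> \<in> iso (INquot n) (sym_group n)"
    by (rule group.iso_set_sym[OF sym_group_is_group perm_class_iso[OF assms]])
  have "?\<psi> (Cmg n `` {\<alpha>}) = perm_of n (INsigma n \<alpha>)" if "\<alpha> \<in> INinf n" for \<alpha>
  proof -
    have "inj_on (perm_class n) (carrier (sym_group n))"
      using perm_class_iso[OF assms] by (simp add: iso_def bij_betw_def)
    moreover have "perm_of n \<alpha> \<in> carrier (sym_group n)"
      using perm_of_props(1)[OF assms that] by (simp add: sym_group_def)
    ultimately show ?thesis
      by (simp add: Cmg_class_eq[OF assms that] perm_of_INsigma[OF assms that])
  qed
  then show ?thesis
    using ex1_unit_idem_decomp[OF assms] Cmg_iff_perm_of_eq[OF assms] INsigma_eq_iff[OF assms]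
      group_INquot[OF assms] \<psi> perm_of_units_iso[OF assms]
    unfolding is_iso_def by blast
qed

end
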